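(* Let $n\geq 1$ and $d\geq 1$ be integers, and let $p(x)=p(x_1,\ldots,x_n)$ be any form (homogeneous polynomial) of degree $2d$ with real coefficients. Then there exists $\lambda\in\mathbb{R}$ such that the form $p(x)-\lambda\left(\sum_{i=1}^n x_i^2\right)^d$ is dsos.
   Context: Let $z(x,d)$ denote the vector of all monomials of degree exactly $d$ in the variables $x=(x_1,\ldots,x_n)$ (of length $\binom{n+d-1}{d}$). A real symmetric matrix $Q=(q_{ij})$ is diagonally dominant (dd) if $q_{ii}\geq \sum_{j\neq i}|q_{ij}|$ for all $i$. A form $f$ of degree $2d$ in $n$ variables is called diagonally-dominant-sum-of-squares (dsos) if there exists a diagonally dominant symmetric matrix $Q$ such that $f(x)=z(x,d)^T Q\, z(x,d)$ identically. *)

theory Defs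
  imports Complex_Main
begin

text \<open>Exponent vectors of monomials of degree exactly k in the variables x_0,...,x_(n-1).\<close>
definition mons :: "nat \<Rightarrow> nat \<Rightarrow> (nat \<Rightarrow> nat) set" where
  "mons n k = {\<alpha>. (\<forall>i\<ge>n. \<alpha> i = 0) \<and> (\<Sum>i<n. \<alpha> i) = k}"

definition monom :: "nat \<Rightarrow> (nat \<Rightarrow> nat) \<Rightarrow> (nat \<Rightarrow> real) \<Rightarrow> real" where
  "monom n \<alpha> x = (\<Prod>i<n. x i ^ \<alpha> i)"

definition is_form :: "nat \<Rightarrow> nat \<Rightarrow> ((nat \<Rightarrow> real) \<Rightarrow> real) \<Rightarrow> bool" where
  "is_form n k f \<longleftrightarrow> (\<exists>c :: (nat \<Rightarrow> nat) \<Rightarrow> real.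
      \<forall>x. f x = (\<Sum>\<alpha>\<in>mons n k. c \<alpha> * monom n \<alpha> x))"

definition dd_sym :: "'a set \<Rightarrow> ('a \<Rightarrow> 'a \<Rightarrow> real) \<Rightarrow> bool" where
  "dd_sym I Q \<longleftrightarrow> (\<forall>i\<in>I. \<forall>j\<in>I. Q i j = Q j i) \<and>
     (\<forall>i\<in>I. Q i i \<ge> (\<Sum>j\<in>I - {i}. \<bar>Q i j\<bar>))"

text \<open>f is dsos: f(x) = z(x,d)^T Q z(x,d) identically with Q symmetric diagonally dominant;
  the vector z(x,d) is indexed by the monomials of degree d.\<close>
definition dsos :: "nat \<Rightarrow> nat \<Rightarrow> ((nat \<Rightarrow> real) \<Rightarrow> real) \<Rightarrow> bool" where
  "dsos n d f \<longleftrightarrow> (\<exists>Q. dd_sym (mons n d) Q \<and>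
     (\<forall>x. f x = (\<Sum>\<alpha>\<in>mons n d. \<Sum>\<beta>\<in>mons n d. monom n \<alpha> x * Q \<alpha> \<beta> * monom n \<beta> x)))"

end

theory Submission
  imports Defs
begin

text \<open>Write p as a quadratic form z(x,d)^T P z(x,d) with P symmetric, spreading each
  coefficient of p evenly over the pairs of degree-d monomials whose product it multiplies.
  By induction on d, the power (x_1^2 + ... + x_n^2)^d equals z(x,d)^T D z(x,d) for a
  diagonal matrix D with strictly positive diagonal, since every monomial of degree d
  arises as a product of one of degree d-1 and a variable. Subtracting lam D with
  lam sufficiently negative makes every diagonal entry dominate its row.\<close>

lemma finite_mons: "finite (mons n k)"
proof -
  have "mons n k \<subseteq> {f. \<forall>x. (x \<in> {..<n} \<longrightarrow> f x \<in> {..k}) \<and> (x \<notin> {..<n} \<longrightarrow> f x = 0)}"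
  proof
    fix f assume f: "f \<in> mons n k"
    have "f x \<le> k" if "x < n" for x
    proof -
      have "f x \<le> (\<Sum>i<n. f i)" using that by (intro member_le_sum) auto
      then show ?thesis using f by (simp add: mons_def)
    qed
    then show "f \<in> {f. \<forall>x. (x \<in> {..<n} \<longrightarrow> f x \<in> {..k}) \<and> (x \<notin> {..<n} \<longrightarrow> f x = 0)}"
      using f by (auto simp: mons_def)
  qed
  moreover have "finite {f. \<forall>x. (x \<in> {..<n} \<longrightarrow> f x \<in> {..k}) \<and> (x \<notin> {..<n} \<longrightarrow> (f x::nat) = 0)}"
    by (rule finite_set_of_finite_funs) auto
  ultimately show ?thesis by (rule finite_subset)
qed

lemma monom_add: "monom n (\<lambda>i. a i + b i) x = monom n a x * monom n b x"
  by (simp add: monom_def power_add prod.distrib)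

lemma mons_add: "a \<in> mons n k \<Longrightarrow> b \<in> mons n l \<Longrightarrow> (\<lambda>i. a i + b i) \<in> mons n (k + l)"
  by (simp add: mons_def sum.distrib)

lemma mons_0: "mons n 0 = {\<lambda>_. 0}"
  by (auto simp: mons_def fun_eq_iff) (metis not_le lessThan_iff)

lemma mons_1: "mons n 1 = (\<lambda>i j. if j = i then 1 else 0) ` {..<n}"
proof
  show "(\<lambda>i j. if j = i then 1 else 0) ` {..<n} \<subseteq> mons n 1"
    by (auto simp: mons_def)
next
  show "mons n 1 \<subseteq> (\<lambda>i j. if j = i then 1 else 0) ` {..<n}"
  proof
    fix b assume b: "b \<in> mons n 1"
    then have sum_b: "(\<Sum>i<n. b i) = 1" and zero: "\<forall>i\<ge>n. b i = 0" by (auto simp: mons_def)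
    then obtain j where j: "j < n" "b j > 0"
      by (metis lessThan_iff neq0_conv sum.neutral zero_neq_one)
    have "(\<Sum>i<n. b i) = b j + (\<Sum>i\<in>{..<n}-{j}. b i)"
      using j by (simp add: sum.remove)
    with sum_b j have "b j = 1" and "(\<Sum>i\<in>{..<n}-{j}. b i) = 0" by arith+
    with zero have "b = (\<lambda>i. if i = j then 1 else 0)"
      by (auto simp: fun_eq_iff) (metis Diff_iff lessThan_iff not_le singletonD)
    then show "b \<in> (\<lambda>i j. if j = i then 1 else 0) ` {..<n}" using j by blast
  qed
qed

lemma monom_unit: "i < n \<Longrightarrow> monom n (\<lambda>j. if j = i then 1 else 0) x = x i"
  by (simp add: monom_def if_distrib prod.delta' cong: if_cong)

definition mons_splits :: "nat \<Rightarrow> nat \<Rightarrow> nat \<Rightarrow> (nat \<Rightarrow> nat) \<Rightarrow> ((nat \<Rightarrow> nat) \<times> (nat \<Rightarrow> nat)) set" where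
  "mons_splits n k l g = {s \<in> mons n k \<times> mons n l. (\<lambda>i. fst s i + snd s i) = g}"

lemma finite_mons_splits: "finite (mons_splits n k l g)"
  unfolding mons_splits_def using finite_mons by auto

lemma mons_splits_nonempty:
  assumes "g \<in> mons n (k + l)"
  shows "mons_splits n k l g \<noteq> {}"
  using assms
proof (induction k arbitrary: l)
  case 0
  then have "((\<lambda>_. 0), g) \<in> mons_splits n 0 l g"
    by (simp add: mons_splits_def mons_def)
  then show ?case by blast
next
  case (Suc k)
  then have "g \<in> mons n (k + Suc l)" by simp
  with Suc.IH obtain a b where a: "a \<in> mons n k" and b: "b \<in> mons n (Suc l)"
    and ab: "(\<lambda>i. a i + b i) = g"
    unfolding mons_splits_def by fastforce
  from b have sum_b: "(\<Sum>i<n. b i) = Suc l" by (simp add: mons_def)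
  then obtain j where j: "j < n" "b j > 0"
    by (metis lessThan_iff neq0_conv sum.neutral Zero_not_Suc)
  define a' where "a' = a(j := Suc (a j))"
  define b' where "b' = b(j := b j - 1)"
  have "(\<Sum>i<n. a' i) = Suc (\<Sum>i<n. a i)"
    using j by (simp add: a'_def sum.remove sum.cong[of "{..<n} - {j}" _ a' a])
  with a j have "a' \<in> mons n (Suc k)" by (auto simp: mons_def a'_def)
  moreover have "(\<Sum>i<n. b' i) + 1 = (\<Sum>i<n. b i)"
    using j by (simp add: b'_def sum.remove sum.cong[of "{..<n} - {j}" _ b' b])
  with b sum_b j have "b' \<in> mons n l" by (auto simp: mons_def b'_def)
  moreover have "(\<lambda>i. a' i + b' i) = (\<lambda>i. a i + b i)"
    using j by (auto simp: a'_def b'_def fun_eq_iff)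
  ultimately show ?case using ab unfolding mons_splits_def by fastforce
qed

lemma sum_mons_pairs_regroup:
  fixes F :: "(nat \<Rightarrow> nat) \<Rightarrow> (nat \<Rightarrow> nat) \<Rightarrow> real"
  shows "(\<Sum>a\<in>mons n k. \<Sum>b\<in>mons n l. F a b * H (\<lambda>i. a i + b i)) =
    (\<Sum>g\<in>mons n (k + l). (\<Sum>s\<in>mons_splits n k l g. F (fst s) (snd s)) * H g)"
proof -
  let ?S = "mons n k \<times> mons n l"
  let ?G = "\<lambda>s. (\<lambda>i. fst s i + snd s i)"
  have "(\<Sum>a\<in>mons n k. \<Sum>b\<in>mons n l. F a b * H (\<lambda>i. a i + b i))
      = (\<Sum>s\<in>?S. F (fst s) (snd s) * H (?G s))"
    by (simp add: sum.cartesian_product case_prod_beta')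
  also have "\<dots> = (\<Sum>g\<in>mons n (k + l). \<Sum>s\<in>{s\<in>?S. ?G s = g}. F (fst s) (snd s) * H (?G s))"
    by (rule sum.group[symmetric]) (auto simp: finite_mons intro: mons_add)
  also have "\<dots> = (\<Sum>g\<in>mons n (k + l). (\<Sum>s\<in>mons_splits n k l g. F (fst s) (snd s)) * H g)"
    by (rule sum.cong[OF refl]) (simp add: mons_splits_def sum_distrib_right)
  finally show ?thesis .
qed

lemma form_eq_symmetric_gram:
  assumes "is_form n (2 * d) p"
  obtains P where "\<And>a b. P a b = P b a"
    and "\<And>x. p x = (\<Sum>a\<in>mons n d. \<Sum>b\<in>mons n d. monom n a x * P a b * monom n b x)"
proof -
  from assms obtain c where c: "\<And>x. p x = (\<Sum>g\<in>mons n (d + d). c g * monom n g x)"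
    by (auto simp: is_form_def mult_2)
  define N where "N g = real (card (mons_splits n d d g))" for g
  define P where "P a b = c (\<lambda>i. a i + b i) / N (\<lambda>i. a i + b i)" for a b
  have N_pos: "N g > 0" if "g \<in> mons n (d + d)" for g
    using mons_splits_nonempty[OF that] finite_mons_splits
    by (simp add: N_def card_gt_0_iff)
  have "p x = (\<Sum>a\<in>mons n d. \<Sum>b\<in>mons n d. monom n a x * P a b * monom n b x)" for x
  proof -
    have "(\<Sum>a\<in>mons n d. \<Sum>b\<in>mons n d. monom n a x * P a b * monom n b x)
        = (\<Sum>a\<in>mons n d. \<Sum>b\<in>mons n d. 1 * (\<lambda>g. c g / N g * monom n g x) (\<lambda>i. a i + b i))"
      by (simp add: P_def monom_add mult_ac)
    also have "\<dots> = (\<Sum>g\<in>mons n (d + d). N g * (c g / N g * monom n g x))"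
      using sum_mons_pairs_regroup[of "\<lambda>_ _. 1" "\<lambda>g. c g / N g * monom n g x" n d d]
      by (simp add: N_def)
    also have "\<dots> = (\<Sum>g\<in>mons n (d + d). c g * monom n g x)"
      by (rule sum.cong[OF refl]) (simp add: N_pos less_imp_neq[symmetric])
    finally show ?thesis by (simp add: c)
  qed
  moreover have "P a b = P b a" for a b by (simp add: P_def add.commute)
  ultimately show thesis using that by blast
qed

lemma product_of_diagonal_squares:
  assumes u: "\<And>a. a \<in> mons n k \<Longrightarrow> u a > 0" and v: "\<And>b. b \<in> mons n l \<Longrightarrow> v b > 0"
  obtains w where "\<And>g. g \<in> mons n (k + l) \<Longrightarrow> w g > 0"
    and "\<And>x. (\<Sum>a\<in>mons n k. u a * (monom n a x)\<^sup>2) * (\<Sum>b\<in>mons n l. v b * (monom n b x)\<^sup>2)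
             = (\<Sum>g\<in>mons n (k + l). w g * (monom n g x)\<^sup>2)"
proof
  define w where "w g = (\<Sum>s\<in>mons_splits n k l g. u (fst s) * v (snd s))" for g
  show "w g > 0" if "g \<in> mons n (k + l)" for g
    unfolding w_def
    by (rule sum_pos[OF finite_mons_splits mons_splits_nonempty[OF that]])
      (use u v in \<open>auto simp: mons_splits_def\<close>)
  show "(\<Sum>a\<in>mons n k. u a * (monom n a x)\<^sup>2) * (\<Sum>b\<in>mons n l. v b * (monom n b x)\<^sup>2)
      = (\<Sum>g\<in>mons n (k + l). w g * (monom n g x)\<^sup>2)" for x
  proof -
    have "(\<Sum>a\<in>mons n k. u a * (monom n a x)\<^sup>2) * (\<Sum>b\<in>mons n l. v b * (monom n b x)\<^sup>2)
      = (\<Sum>a\<in>mons n k. \<Sum>b\<in>mons n l. (u a * v b) * (\<lambda>g. (monom n g x)\<^sup>2) (\<lambda>i. a i + b i))"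
      by (simp add: sum_product monom_add power_mult_distrib mult_ac)
    also have "\<dots> = (\<Sum>g\<in>mons n (k + l). w g * (monom n g x)\<^sup>2)"
      unfolding w_def by (rule sum_mons_pairs_regroup)
    finally show ?thesis .
  qed
qed

lemma sum_squares_eq_diagonal: "(\<Sum>i<n. (x i)\<^sup>2) = (\<Sum>b\<in>mons n 1. 1 * (monom n b x)\<^sup>2)"
proof -
  have "inj_on (\<lambda>i j. if j = i then (1::nat) else 0) {..<n}"
    by (auto simp: inj_on_def fun_eq_iff)
  then show ?thesis unfolding mons_1 by (simp add: sum.reindex monom_unit)
qed

lemma sum_squares_power_eq_diagonal:
  obtains m where "\<And>a. a \<in> mons n d \<Longrightarrow> m a > 0"
    and "\<And>x. (\<Sum>i<n. (x i)\<^sup>2) ^ d = (\<Sum>a\<in>mons n d. m a * (monom n a x)\<^sup>2)"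
proof (induction d arbitrary: thesis)
  case 0
  show ?case by (rule 0[of "\<lambda>_. 1"]) (simp_all add: mons_0 monom_def)
next
  case (Suc d)
  obtain m where m_pos: "\<And>a. a \<in> mons n d \<Longrightarrow> m a > 0"
    and m_eq: "\<And>x. (\<Sum>i<n. (x i)\<^sup>2) ^ d = (\<Sum>a\<in>mons n d. m a * (monom n a x)\<^sup>2)"
    using Suc.IH by blast
  obtain w where w_pos: "\<And>g. g \<in> mons n (d + 1) \<Longrightarrow> w g > 0"
    and w_eq: "\<And>x. (\<Sum>a\<in>mons n d. m a * (monom n a x)\<^sup>2) * (\<Sum>b\<in>mons n 1. 1 * (monom n b x)\<^sup>2)
                 = (\<Sum>g\<in>mons n (d + 1). w g * (monom n g x)\<^sup>2)"
    using product_of_diagonal_squares[of n d m 1 "\<lambda>_. 1"] m_pos by auto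
  show ?case
  proof (rule Suc.prems)
    show "w a > 0" if "a \<in> mons n (Suc d)" for a using w_pos that by simp
    show "(\<Sum>i<n. (x i)\<^sup>2) ^ Suc d = (\<Sum>a\<in>mons n (Suc d). w a * (monom n a x)\<^sup>2)" for x
    proof -
      have "(\<Sum>i<n. (x i)\<^sup>2) ^ Suc d = (\<Sum>i<n. (x i)\<^sup>2) ^ d * (\<Sum>i<n. (x i)\<^sup>2)"
        by (rule power_Suc2)
      also have "\<dots> = (\<Sum>a\<in>mons n d. m a * (monom n a x)\<^sup>2) * (\<Sum>b\<in>mons n 1. 1 * (monom n b x)\<^sup>2)"
        by (subst m_eq) (simp only: sum_squares_eq_diagonal)
      also have "\<dots> = (\<Sum>g\<in>mons n (d + 1). w g * (monom n g x)\<^sup>2)"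
        by (rule w_eq)
      finally show ?thesis by simp
    qed
  qed
qed

lemma dd_sym_diagonal_shift:
  assumes "finite I" and sym: "\<And>a b. P a b = P b a" and pos: "\<And>a. a \<in> I \<Longrightarrow> m a > 0"
  shows "\<exists>lam. dd_sym I (\<lambda>a b. P a b - lam * (if a = b then m a else 0))"
proof -
  define K where "K a = (\<Sum>b\<in>I. \<bar>P a b\<bar>)" for a
  define lam where "lam = - (\<Sum>a\<in>I. K a / m a)"
  have "P a a - lam * m a \<ge> (\<Sum>b\<in>I - {a}. \<bar>P a b\<bar>)" if a: "a \<in> I" for a
  proof -
    have "K a / m a \<le> - lam"
      unfolding lam_def minus_minus using a pos \<open>finite I\<close>
      by (intro member_le_sum) (auto simp: K_def intro!: divide_nonneg_pos sum_nonneg)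
    then have "K a \<le> - lam * m a" using pos[OF a] by (simp add: divide_le_eq)
    moreover have "K a = \<bar>P a a\<bar> + (\<Sum>b\<in>I - {a}. \<bar>P a b\<bar>)"
      unfolding K_def using a \<open>finite I\<close> by (simp add: sum.remove)
    ultimately show ?thesis by linarith
  qed
  moreover have "(\<Sum>b\<in>I - {a}. \<bar>P a b - lam * (if a = b then m a else 0)\<bar>) = (\<Sum>b\<in>I - {a}. \<bar>P a b\<bar>)" for a
    by (rule sum.cong) auto
  ultimately have "dd_sym I (\<lambda>a b. P a b - lam * (if a = b then m a else 0))"
    unfolding dd_sym_def using sym by auto
  then show ?thesis ..
qed

lemma quadratic_form_diagonal_shift:
  fixes z :: "'a \<Rightarrow> real"
  assumes "finite I"
  shows "(\<Sum>a\<in>I. \<Sum>b\<in>I. z a * (P a b - lam * (if a = b then m a else 0)) * z b)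
       = (\<Sum>a\<in>I. \<Sum>b\<in>I. z a * P a b * z b) - lam * (\<Sum>a\<in>I. m a * (z a)\<^sup>2)"
proof -
  have "(\<Sum>b\<in>I. z a * (P a b - lam * (if a = b then m a else 0)) * z b)
      = (\<Sum>b\<in>I. z a * P a b * z b) - lam * (m a * (z a)\<^sup>2)" if "a \<in> I" for a
  proof -
    have "(\<Sum>b\<in>I. z a * (P a b - lam * (if a = b then m a else 0)) * z b)
        = (\<Sum>b\<in>I. z a * P a b * z b - (if a = b then lam * (m a * (z a)\<^sup>2) else 0))"
      by (rule sum.cong) (auto simp: algebra_simps power2_eq_square)
    then show ?thesis using that assms by (simp add: sum_subtractf sum.delta)
  qed
  then show ?thesis by (simp add: sum_subtractf sum_distrib_left)
qed

theorem theorem3: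
  fixes n d :: nat and p :: "(nat \<Rightarrow> real) \<Rightarrow> real"
  assumes "n \<ge> 1" and "d \<ge> 1" and "is_form n (2 * d) p"
  shows "\<exists>lam :: real. dsos n d (\<lambda>x. p x - lam * (\<Sum>i<n. (x i)\<^sup>2) ^ d)"
proof -
  obtain P where P_sym: "\<And>a b. P a b = P b a"
    and p_eq: "\<And>x. p x = (\<Sum>a\<in>mons n d. \<Sum>b\<in>mons n d. monom n a x * P a b * monom n b x)"
    using form_eq_symmetric_gram[OF assms(3)] by blast
  obtain m where m_pos: "\<And>a. a \<in> mons n d \<Longrightarrow> m a > 0"
    and m_eq: "\<And>x. (\<Sum>i<n. (x i)\<^sup>2) ^ d = (\<Sum>a\<in>mons n d. m a * (monom n a x)\<^sup>2)"
    using sum_squares_power_eq_diagonal by blast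
  obtain lam where "dd_sym (mons n d) (\<lambda>a b. P a b - lam * (if a = b then m a else 0))"
    using dd_sym_diagonal_shift[of "mons n d" P m, OF finite_mons P_sym m_pos] by blast
  moreover have "p x - lam * (\<Sum>i<n. (x i)\<^sup>2) ^ d = (\<Sum>a\<in>mons n d. \<Sum>b\<in>mons n d.
      monom n a x * (P a b - lam * (if a = b then m a else 0)) * monom n b x)" for x
    by (simp add: quadratic_form_diagonal_shift[OF finite_mons] p_eq m_eq)
  ultimately show ?thesis unfolding dsos_def by blast
qed

end
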